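(* Let $f\in\mathbb{R}[X_1,\dots,X_n]$ be a non-constant polynomial of degree $2d$ such that $|\alpha|<2d$ for each $\alpha\in\Delta$ and $f_{2d,i}>0$ for $i=1,\dots,n$. Let $t:=|\Delta|$. Then $$f_{gp}\ \geq\ r_{dmt}:=f_0-\sum_{\alpha\in\Delta}(2d-|\alpha|)\left[\left(\frac{f_{\alpha}}{2d}\right)^{2d}t^{|\alpha|}\alpha^{\alpha}f_{2d}^{-\alpha}\right]^{\frac{1}{2d-|\alpha|}}.$$
   Context: $\mathbb{N}=\{0,1,2,\dots\}$. For $\alpha\in\mathbb{N}^n$ write $\underline{X}^\alpha=X_1^{\alpha_1}\cdots X_n^{\alpha_n}$, $|\alpha|=\sum_i\alpha_i$, and for $a\in\mathbb{R}^n$, $a^{\alpha}=\prod_i a_i^{\alpha_i}$ with $0^0=1$ (so $\alpha^\alpha=\prod_i\alpha_i^{\alpha_i}$). For $f=\sum_\alpha f_\alpha\underline{X}^\alpha$ of degree $2d$: $f_0$ constant term, $f_{2d,i}$ coefficient of $X_i^{2d}$, $f_{2d}^{-\alpha}:=\prod_{i=1}^n f_{2d,i}^{-\alpha_i}$, $\Omega=\{\alpha: f_\alpha\ne0\}\setminus\{\underline{0},2d\epsilon_1,\dots,2d\epsilon_n\}$, $\Delta=\{\alpha\in\Omega:\ f_\alpha<0\text{ or }\alpha_i\text{ odd for some }i\}$, $\Delta^{<2d}=\{\alpha\in\Delta:|\alpha|<2d\}$. $f_{gp}$ is the supremum (with $\sup\emptyset=-\infty$) of all $r\in\mathbb{R}$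 for which there exist reals $a_{\alpha,i}\ge0$ ($\alpha\in\Delta$, $i=1,\dots,n$), $a_{\alpha,i}=0$ iff $\alpha_i=0$, with, for $a_\alpha=(a_{\alpha,1},\dots,a_{\alpha,n})$: (1) $(2d)^{2d}a_\alpha^\alpha=|f_\alpha|^{2d}\alpha^\alpha$ for $\alpha\in\Delta$, $|\alpha|=2d$; (2) $f_{2d,i}\ge\sum_{\alpha\in\Delta}a_{\alpha,i}$ for all $i$; (3) $f_0-r\ge\sum_{\alpha\in\Delta^{<2d}}(2d-|\alpha|)\big[\frac{|f_\alpha|^{2d}\alpha^\alpha}{(2d)^{2d}a_\alpha^\alpha}\big]^{1/(2d-|\alpha|)}$. *)

theory Defs
  imports "HOL-Analysis.Analysis" "HOL-Library.Extended_Real"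
begin

text \<open>A real polynomial in variables X_0,...,X_(n-1) is represented by its coefficient
  function on exponent vectors alpha :: nat => nat (alpha i = exponent of X_i).\<close>

definition is_poly :: "nat \<Rightarrow> ((nat \<Rightarrow> nat) \<Rightarrow> real) \<Rightarrow> bool" where
  "is_poly n f \<longleftrightarrow> finite {\<alpha>. f \<alpha> \<noteq> 0} \<and> (\<forall>\<alpha>. f \<alpha> \<noteq> 0 \<longrightarrow> (\<forall>i\<ge>n. \<alpha> i = 0))"

definition mdeg :: "nat \<Rightarrow> (nat \<Rightarrow> nat) \<Rightarrow> nat" where
  "mdeg n \<alpha> = (\<Sum>i<n. \<alpha> i)"

definition poly_degree :: "nat \<Rightarrow> ((nat \<Rightarrow> nat) \<Rightarrow> real) \<Rightarrow> nat" where
  "poly_degree n f = Max (mdeg n ` {\<alpha>. f \<alpha> \<noteq> 0})"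

definition unitexp :: "nat \<Rightarrow> nat \<Rightarrow> nat \<Rightarrow> nat" where
  "unitexp k i = (\<lambda>j. if j = i then k else 0)"

definition const_coeff :: "((nat \<Rightarrow> nat) \<Rightarrow> real) \<Rightarrow> real" where
  "const_coeff f = f (\<lambda>_. 0)"

definition top_coeff :: "nat \<Rightarrow> ((nat \<Rightarrow> nat) \<Rightarrow> real) \<Rightarrow> nat \<Rightarrow> real" where
  "top_coeff d f i = f (unitexp (2*d) i)"

definition Omega :: "nat \<Rightarrow> nat \<Rightarrow> ((nat \<Rightarrow> nat) \<Rightarrow> real) \<Rightarrow> (nat \<Rightarrow> nat) set" where
  "Omega n d f = {\<alpha>. f \<alpha> \<noteq> 0} - ({\<lambda>_. 0} \<union> {unitexp (2*d) i | i. i < n})"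

definition Delta :: "nat \<Rightarrow> nat \<Rightarrow> ((nat \<Rightarrow> nat) \<Rightarrow> real) \<Rightarrow> (nat \<Rightarrow> nat) set" where
  "Delta n d f = {\<alpha> \<in> Omega n d f. f \<alpha> < 0 \<or> (\<exists>i<n. odd (\<alpha> i))}"

definition Delta_lt :: "nat \<Rightarrow> nat \<Rightarrow> ((nat \<Rightarrow> nat) \<Rightarrow> real) \<Rightarrow> (nat \<Rightarrow> nat) set" where
  "Delta_lt n d f = {\<alpha> \<in> Delta n d f. mdeg n \<alpha> < 2*d}"

text \<open>a^alpha = prod_i a_i^alpha_i (with 0^0 = 1)\<close>
definition vpow :: "nat \<Rightarrow> (nat \<Rightarrow> real) \<Rightarrow> (nat \<Rightarrow> nat) \<Rightarrow> real" where
  "vpow n a \<alpha> = (\<Prod>i<n. a i ^ \<alpha> i)"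

definition gp_set :: "nat \<Rightarrow> nat \<Rightarrow> ((nat \<Rightarrow> nat) \<Rightarrow> real) \<Rightarrow> real set" where
  "gp_set n d f = {r. \<exists>a :: (nat \<Rightarrow> nat) \<Rightarrow> nat \<Rightarrow> real.
     (\<forall>\<alpha>\<in>Delta n d f. \<forall>i<n. a \<alpha> i \<ge> 0 \<and> (a \<alpha> i = 0 \<longleftrightarrow> \<alpha> i = 0)) \<and>
     (\<forall>\<alpha>\<in>Delta n d f. mdeg n \<alpha> = 2*d \<longrightarrow>
        real (2*d) ^ (2*d) * vpow n (a \<alpha>) \<alpha> = \<bar>f \<alpha>\<bar> ^ (2*d) * vpow n (\<lambda>i. real (\<alpha> i)) \<alpha>) \<and>
     (\<forall>i<n. top_coeff d f i \<ge> (\<Sum>\<alpha>\<in>Delta n d f. a \<alpha> i)) \<and>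
     const_coeff f - r \<ge> (\<Sum>\<alpha>\<in>Delta_lt n d f.
        (real (2*d) - real (mdeg n \<alpha>)) *
        ((\<bar>f \<alpha>\<bar> ^ (2*d) * vpow n (\<lambda>i. real (\<alpha> i)) \<alpha>) /
          (real (2*d) ^ (2*d) * vpow n (a \<alpha>) \<alpha>)) powr (1 / (real (2*d) - real (mdeg n \<alpha>))))}"

text \<open>f_gp as an extended real: supremum, with Sup {} = -infinity.\<close>
definition f_gp :: "nat \<Rightarrow> nat \<Rightarrow> ((nat \<Rightarrow> nat) \<Rightarrow> real) \<Rightarrow> ereal" where
  "f_gp n d f = Sup (ereal ` gp_set n d f)"

definition r_dmt :: "nat \<Rightarrow> nat \<Rightarrow> ((nat \<Rightarrow> nat) \<Rightarrow> real) \<Rightarrow> real" where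
  "r_dmt n d f = const_coeff f - (\<Sum>\<alpha>\<in>Delta n d f.
     (real (2*d) - real (mdeg n \<alpha>)) *
     ((f \<alpha> / real (2*d)) ^ (2*d) * real (card (Delta n d f)) ^ mdeg n \<alpha> *
      vpow n (\<lambda>i. real (\<alpha> i)) \<alpha> * (\<Prod>i<n. inverse (top_coeff d f i) ^ \<alpha> i))
     powr (1 / (real (2*d) - real (mdeg n \<alpha>))))"

end

theory Submission
  imports Defs
begin

text \<open>With \<open>t = |\<Delta>|\<close>, split each diagonal coefficient evenly: take
  \<open>a(\<alpha>,i) = f_{2d,i} / t\<close> whenever \<open>\<alpha>_i \<noteq> 0\<close>. Then \<open>\<Sum>_\<alpha> a(\<alpha>,i) \<le> f_{2d,i}\<close>,
  condition (1) is vacuous because \<open>\<Delta>\<close> has no terms of top degree, and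
  \<open>a_\<alpha>^\<alpha> = f_{2d}^\<alpha> / t^|\<alpha>|\<close> turns the right-hand side of (3) into exactly
  \<open>f_0 - r_dmt\<close>.\<close>

definition uniform_weights ::
    "nat \<Rightarrow> ((nat \<Rightarrow> nat) \<Rightarrow> real) \<Rightarrow> real \<Rightarrow> (nat \<Rightarrow> nat) \<Rightarrow> nat \<Rightarrow> real" where
  "uniform_weights d f t \<alpha> i = (if \<alpha> i = 0 then 0 else top_coeff d f i / t)"

lemma finite_Delta:
  assumes "is_poly n f"
  shows "finite (Delta n d f)"
  using assms unfolding Delta_def Omega_def is_poly_def by (auto intro: finite_subset)

lemma uniform_weights_nonneg_iff_zero:
  assumes "t > 0" and "top_coeff d f i > 0"
  shows "uniform_weights d f t \<alpha> i \<ge> 0 \<and> (uniform_weights d f t \<alpha> i = 0 \<longleftrightarrow> \<alpha> i = 0)"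
  using assms unfolding uniform_weights_def by auto

lemma sum_uniform_weights_le_top_coeff:
  assumes "finite D" and "top_coeff d f i \<ge> 0"
  shows "(\<Sum>\<alpha>\<in>D. uniform_weights d f (real (card D)) \<alpha> i) \<le> top_coeff d f i"
proof -
  have "(\<Sum>\<alpha>\<in>D. uniform_weights d f (real (card D)) \<alpha> i) \<le> (\<Sum>\<alpha>\<in>D. top_coeff d f i / card D)"
    by (rule sum_mono) (use assms(2) in \<open>simp add: uniform_weights_def\<close>)
  also have "\<dots> \<le> top_coeff d f i"
    using assms by (cases "D = {}") simp_all
  finally show ?thesis .
qed

lemma vpow_uniform_weights:
  "vpow n (uniform_weights d f t \<alpha>) \<alpha> = (\<Prod>i<n. top_coeff d f i ^ \<alpha> i) / t ^ mdeg n \<alpha>"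
proof -
  have "vpow n (uniform_weights d f t \<alpha>) \<alpha> = (\<Prod>i<n. (top_coeff d f i / t) ^ \<alpha> i)"
    unfolding vpow_def uniform_weights_def by (rule prod.cong) auto
  then show ?thesis
    unfolding mdeg_def power_sum power_divide prod_dividef by simp
qed

lemma gp_term_uniform_weights:
  assumes "t > 0" and "d > 0" and top_pos: "\<forall>i<n. top_coeff d f i > 0"
  shows "(\<bar>f \<alpha>\<bar> ^ (2*d) * vpow n (\<lambda>i. real (\<alpha> i)) \<alpha>) /
           (real (2*d) ^ (2*d) * vpow n (uniform_weights d f t \<alpha>) \<alpha>)
       = (f \<alpha> / real (2*d)) ^ (2*d) * t ^ mdeg n \<alpha> *
           vpow n (\<lambda>i. real (\<alpha> i)) \<alpha> * (\<Prod>i<n. inverse (top_coeff d f i) ^ \<alpha> i)"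
proof -
  define T where "T = (\<Prod>i<n. top_coeff d f i ^ \<alpha> i)"
  have "T > 0"
    unfolding T_def using top_pos by (auto intro: prod_pos)
  have inverse_T: "(\<Prod>i<n. inverse (top_coeff d f i) ^ \<alpha> i) = inverse T"
    unfolding T_def power_inverse prod_inversef[symmetric] by simp
  have "\<bar>f \<alpha>\<bar> ^ (2*d) = f \<alpha> ^ (2*d)"
    by (simp add: power_even_abs)
  then show ?thesis
    unfolding vpow_uniform_weights T_def[symmetric] inverse_T power_divide
    using \<open>t > 0\<close> \<open>T > 0\<close> \<open>d > 0\<close> by (simp add: field_simps)
qed

lemma r_dmt_mem_gp_set:
  assumes "is_poly n f" and "d > 0"
    and below_top: "\<forall>\<alpha>\<in>Delta n d f. mdeg n \<alpha> < 2 * d"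
    and top_pos: "\<forall>i<n. top_coeff d f i > 0"
  shows "r_dmt n d f \<in> gp_set n d f"
proof -
  define D where "D = Delta n d f"
  define a where "a = uniform_weights d f (real (card D))"
  have "finite D"
    unfolding D_def using assms(1) by (rule finite_Delta)
  have card_pos: "real (card D) > 0" if "\<alpha> \<in> D" for \<alpha>
    using that \<open>finite D\<close> card_gt_0_iff by fastforce
  have "Delta_lt n d f = D"
    using below_top unfolding D_def Delta_lt_def by auto
  then have "const_coeff f - r_dmt n d f =
      (\<Sum>\<alpha>\<in>Delta_lt n d f. (real (2*d) - real (mdeg n \<alpha>)) *
        ((\<bar>f \<alpha>\<bar> ^ (2*d) * vpow n (\<lambda>i. real (\<alpha> i)) \<alpha>) /
          (real (2*d) ^ (2*d) * vpow n (a \<alpha>) \<alpha>)) powr (1 / (real (2*d) - real (mdeg n \<alpha>))))"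
    unfolding r_dmt_def D_def[symmetric] a_def
    by (simp only: diff_diff_eq2 diff_self add_0 gp_term_uniform_weights[OF card_pos \<open>d > 0\<close> top_pos]
        cong: sum.cong)
  moreover have "\<forall>\<alpha>\<in>D. \<forall>i<n. a \<alpha> i \<ge> 0 \<and> (a \<alpha> i = 0 \<longleftrightarrow> \<alpha> i = 0)"
    unfolding a_def using card_pos top_pos uniform_weights_nonneg_iff_zero by blast
  moreover have "\<forall>i<n. top_coeff d f i \<ge> (\<Sum>\<alpha>\<in>D. a \<alpha> i)"
    unfolding a_def using \<open>finite D\<close> top_pos
    by (simp add: sum_uniform_weights_le_top_coeff less_imp_le)
  ultimately show ?thesis
    unfolding gp_set_def D_def using below_top by (intro CollectI exI[of _ a]) auto
qed

theorem corollary4p3: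
  fixes n d :: nat and f :: "(nat \<Rightarrow> nat) \<Rightarrow> real"
  assumes "is_poly n f"
    and "{\<alpha>. f \<alpha> \<noteq> 0} \<noteq> {}"
    and "poly_degree n f = 2 * d"
    and "d > 0"
    and "\<forall>\<alpha>\<in>Delta n d f. mdeg n \<alpha> < 2 * d"
    and "\<forall>i<n. top_coeff d f i > 0"
  shows "f_gp n d f \<ge> ereal (r_dmt n d f)"
proof -
  have "r_dmt n d f \<in> gp_set n d f"
    using assms(1,4,5,6) by (rule r_dmt_mem_gp_set)
  then show ?thesis
    unfolding f_gp_def by (simp add: Sup_upper)
qed

end
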